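(* Let $\Delta$ be a simplicial complex on $[n]$, let $1\le r\le n$, and let $\Sigma=\Delta^{[1]}\cup\Delta^{[2]}\cup\dots\cup\Delta^{[r]}$. Suppose $\Delta$ is fixed by permutations on $[r]$. If $\widetilde H_i(\Sigma)\neq0$, then $\widetilde H_{i-1}(\Delta)\neq0$.
   Context: A simplicial complex on $[n]=\{1,\dots,n\}$ is a collection of subsets of $[n]$ closed under taking subsets (not every singleton need belong to it). $\widetilde H_i$ denotes reduced simplicial homology with coefficients in a field $\Bbbk$. For a simplicial complex $\Delta$ and an element $v$ (not necessarily a vertex of $\Delta$), $\Delta^{[v]}=\Delta\cup\{F\cup\{v\}:F\in\Delta\}$. For $X\subset[n]$, $\Delta$ is fixed by permutations on $X$ if $\sigma(\Delta)=\{\sigma(F):F\in\Delta\}$ equals $\Delta$ for every permutation $\sigma$ of $[n]$ fixing each element outside $X$. *)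

theory Defs
  imports "HOL-Combinatorics.Permutations"
begin

definition simplicial_complex :: "nat \<Rightarrow> nat set set \<Rightarrow> bool" where
  "simplicial_complex n \<Delta> \<longleftrightarrow> \<Delta> \<subseteq> Pow {1..n} \<and> (\<forall>F\<in>\<Delta>. \<forall>G. G \<subseteq> F \<longrightarrow> G \<in> \<Delta>)"

definition cone :: "nat set set \<Rightarrow> nat \<Rightarrow> nat set set" where
  "cone \<Delta> v = \<Delta> \<union> {insert v F | F. F \<in> \<Delta>}"

definition fixed_by_perms_on :: "nat set set \<Rightarrow> nat set \<Rightarrow> bool" where
  "fixed_by_perms_on \<Delta> X \<longleftrightarrow> (\<forall>\<sigma>. \<sigma> permutes X \<longrightarrow> (\<lambda>F. \<sigma> ` F) ` \<Delta> = \<Delta>)"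

text \<open>Augmented (reduced) oriented simplicial chain complex with coefficients in a field 'k.
  An i-chain (i :: int, i >= -1) is a function on faces, supported on faces F of Delta with |F| = i+1;
  faces are oriented by the natural order of their vertices.\<close>
definition chains :: "nat set set \<Rightarrow> int \<Rightarrow> (nat set \<Rightarrow> 'k::field) set" where
  "chains \<Delta> i = {c. \<forall>F. c F \<noteq> 0 \<longrightarrow> F \<in> \<Delta> \<and> int (card F) = i + 1}"

text \<open>Boundary: (bd c)(G) = sum over v not in G of (-1)^#{u in G. u < v} * c(G + v).
  On 0-chains this is the augmentation map to the (-1)-chains (supported on the empty face).\<close>
definition bd :: "nat set set \<Rightarrow> (nat set \<Rightarrow> 'k::field) \<Rightarrow> nat set \<Rightarrow> 'k" where
  "bd \<Delta> c G = (\<Sum>v \<in> (\<Union>\<Delta>) - G. (-1) ^ card {u \<in> G. u < v} * c (insert v G))"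

definition reduced_homology_nonzero :: "'k::field itself \<Rightarrow> nat set set \<Rightarrow> int \<Rightarrow> bool" where
  "reduced_homology_nonzero TYPE('k) \<Delta> i \<longleftrightarrow>
     (\<exists>z \<in> (chains \<Delta> i :: (nat set \<Rightarrow> 'k) set). bd \<Delta> z = (\<lambda>_. 0) \<and>
        \<not> (\<exists>w \<in> (chains \<Delta> (i + 1) :: (nat set \<Rightarrow> 'k) set). bd \<Delta> w = z))"

end

theory Submission
  imports Defs
begin

text \<open>
  Writing \<open>\<Sigma>\<^sub>m = \<Delta> \<union> \<Delta>\<^bsup>[1]\<^esup> \<union> \<dots> \<union> \<Delta>\<^bsup>[m]\<^esup>\<close>, we show that if \<open>H\<^sub>i\<^sub>-\<^sub>1(\<Delta>) = 0\<close> then every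
  \<open>i\<close>-cycle of \<open>\<Sigma>\<^sub>m\<close> bounds in \<open>\<Sigma>\<^sub>r\<close>, by induction on \<open>m\<close>. All chains live in the full simplex
  on \<open>[n]\<close>, where coning from a vertex is a chain homotopy between the identity and zero; so a
  cycle of \<open>\<Delta>\<close> bounds its cone from \<open>1\<close>. By the symmetry, the faces of \<open>\<Sigma>\<^sub>m\<^sub>+\<^sub>1\<close> not in \<open>\<Sigma>\<^sub>m\<close> are
  those containing \<open>m+1\<close> and avoiding \<open>[m]\<close>, so a cycle of \<open>\<Sigma>\<^sub>m\<^sub>+\<^sub>1\<close> differs from one of \<open>\<Sigma>\<^sub>m\<close> by
  the cone from \<open>m+1\<close> over a chain whose boundary is an \<open>(i-1)\<close>-cycle of the faces of \<open>\<Delta>\<close>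
  avoiding \<open>[m]\<close>. That complex is acyclic in degree \<open>i-1\<close> like \<open>\<Delta>\<close>, because deleting a vertex
  \<open>a\<close> that can be exchanged with another vertex \<open>b\<close> preserves acyclicity: the relevant cycle of
  the link of \<open>a\<close> is coned off from \<open>b\<close> inside the deletion.
\<close>

definition incidence :: "nat set \<Rightarrow> nat \<Rightarrow> 'k::field" where
  "incidence G v = (-1) ^ card {u\<in>G. u < v}"

definition bdry :: "nat \<Rightarrow> (nat set \<Rightarrow> 'k::field) \<Rightarrow> nat set \<Rightarrow> 'k" where
  "bdry n c G = (\<Sum>v\<in>{1..n} - G. incidence G v * c (insert v G))"

definition cone_chain :: "nat \<Rightarrow> (nat set \<Rightarrow> 'k::field) \<Rightarrow> nat set \<Rightarrow> 'k" where
  "cone_chain a c G = (if a \<in> G then incidence G a * c (G - {a}) else 0)"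

definition link_chain :: "nat \<Rightarrow> (nat set \<Rightarrow> 'k::field) \<Rightarrow> nat set \<Rightarrow> 'k" where
  "link_chain a w F = (if a \<notin> F then incidence F a * w (insert a F) else 0)"

definition link :: "nat \<Rightarrow> nat set set \<Rightarrow> nat set set" where
  "link a \<Gamma> = {F. a \<notin> F \<and> insert a F \<in> \<Gamma>}"

definition deletion :: "nat \<Rightarrow> nat set set \<Rightarrow> nat set set" where
  "deletion a \<Gamma> = {F\<in>\<Gamma>. a \<notin> F}"

definition avoiding :: "nat set set \<Rightarrow> nat \<Rightarrow> nat set set" where
  "avoiding \<Delta> m = {F\<in>\<Delta>. F \<inter> {1..m} = {}}"

definition cones_up_to :: "nat set set \<Rightarrow> nat \<Rightarrow> nat set set" where
  "cones_up_to \<Delta> m = \<Delta> \<union> (\<Union>j\<in>{1..m}. cone \<Delta> j)"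

text \<open>The boundary is that of the full simplex on \<open>[n]\<close>, so that it does not depend on the
  complexes (cf. \<open>bd_eq_bdry\<close>).\<close>
definition cycles_bound_in :: "'k::field itself \<Rightarrow> nat \<Rightarrow> nat set set \<Rightarrow> nat set set \<Rightarrow> int \<Rightarrow> bool" where
  "cycles_bound_in TYPE('k) n \<Gamma> \<Gamma>' k \<longleftrightarrow>
     (\<forall>z \<in> (chains \<Gamma> k :: (nat set \<Rightarrow> 'k) set). bdry n z = (\<lambda>_. 0) \<longrightarrow>
        (\<exists>x \<in> chains \<Gamma>' (k + 1). bdry n x = z))"

abbreviation homology_vanishes :: "'k::field itself \<Rightarrow> nat \<Rightarrow> nat set set \<Rightarrow> int \<Rightarrow> bool" where
  "homology_vanishes K n \<Gamma> k \<equiv> cycles_bound_in K n \<Gamma> \<Gamma> k"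

subsection \<open>Chains on the full simplex\<close>

lemma incidence_insert:
  assumes "v \<notin> G" "v \<noteq> m"
  shows "incidence (insert v G) m = (if v < m then - incidence G m else (incidence G m :: 'k::field))"
proof (cases "v < m")
  case True
  have "{u\<in>insert v G. u < m} = insert v {u\<in>G. u < m}" using True by auto
  moreover have "finite {u\<in>G. u < m}" by (rule finite_subset[of _ "{..<m}"]) auto
  ultimately show ?thesis using True assms by (simp add: incidence_def)
next
  case False
  then have "{u\<in>insert v G. u < m} = {u\<in>G. u < m}" using assms by auto
  then show ?thesis using False by (simp add: incidence_def)
qed

lemma incidence_insert_self: "incidence (insert m G) m = incidence G m"
  unfolding incidence_def by (rule arg_cong[where f = "\<lambda>A. (-1) ^ card A"]) auto

lemma incidence_remove_self: "incidence (G - {m}) m = incidence G m"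
  unfolding incidence_def by (rule arg_cong[where f = "\<lambda>A. (-1) ^ card A"]) auto

lemma incidence_square: "incidence G v * incidence G v = (1::'k::field)"
  by (simp add: incidence_def flip: power_add mult_2)

lemma incidence_nonzero: "incidence G v \<noteq> (0::'k::field)"
  using incidence_square[of G v] by (metis mult_zero_left zero_neq_one)

lemma bdry_add: "bdry n (\<lambda>G. a G + b G) G = bdry n a G + (bdry n b G :: 'k::field)"
  by (simp add: bdry_def distrib_left sum.distrib)

lemma bdry_diff: "bdry n (\<lambda>G. a G - b G) G = bdry n a G - (bdry n b G :: 'k::field)"
  by (simp add: bdry_def right_diff_distrib sum_subtractf)

lemma bdry_nonzeroD:
  "bdry n c G \<noteq> (0::'k::field) \<Longrightarrow> \<exists>v\<in>{1..n} - G. c (insert v G) \<noteq> 0"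
  unfolding bdry_def using sum.not_neutral_contains_not_neutral by fastforce

lemma bdry_eq_0_if_mem:
  "(\<And>F. a \<in> F \<Longrightarrow> c F = (0::'k::field)) \<Longrightarrow> a \<in> G \<Longrightarrow> bdry n c G = 0"
  unfolding bdry_def by (intro sum.neutral) auto

lemma cone_chain_insert: "a \<notin> F \<Longrightarrow> cone_chain a c (insert a F) = incidence F a * c F"
  by (simp add: cone_chain_def incidence_insert_self)

lemma cone_chain_link_chain:
  "cone_chain a (link_chain a w) G + (if a \<notin> G then w G else 0) = (w G :: 'k::field)"
proof (cases "a \<in> G")
  case True
  then have "insert a (G - {a}) = G" by auto
  then show ?thesis using True
    by (simp add: cone_chain_def link_chain_def incidence_remove_self mult.assoc[symmetric]
        incidence_square)
qed (simp add: cone_chain_def)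

lemma cone_chain_restrict_link_chain:
  "cone_chain a (\<lambda>F. if P F then link_chain a z F else 0) G
     = (if a \<in> G \<and> P (G - {a}) then z G else (0::'k::field))"
  using cone_chain_link_chain[of a z G] by (auto simp: cone_chain_def)

lemma bdry_cone_chain:
  fixes c :: "nat set \<Rightarrow> 'k::field"
  assumes a: "a \<in> {1..n}"
  shows "bdry n (cone_chain a c) G = c G - cone_chain a (bdry n c) G"
proof (cases "a \<in> G")
  case False
  have "bdry n (cone_chain a c) G = incidence G a * cone_chain a c (insert a G)
      + (\<Sum>v\<in>({1..n} - G) - {a}. incidence G v * cone_chain a c (insert v G))"
    unfolding bdry_def using a False by (subst sum.remove[of _ a]) auto
  also have "(\<Sum>v\<in>({1..n} - G) - {a}. incidence G v * cone_chain a c (insert v G)) = 0"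
    using False by (intro sum.neutral) (auto simp: cone_chain_def)
  moreover have "cone_chain a (bdry n c) G = 0" using False by (simp add: cone_chain_def)
  ultimately show ?thesis using False
    by (simp add: cone_chain_insert mult.assoc[symmetric] incidence_square)
next
  case True
  define s where "s v = incidence G a * incidence (G - {a}) v * c (insert v (G - {a}))" for v
  have ins: "{1..n} - (G - {a}) = insert a ({1..n} - G)" using a True by auto
  have "cone_chain a (bdry n c) G = c G + (\<Sum>v\<in>{1..n} - G. s v)"
    using True unfolding cone_chain_def bdry_def ins s_def
    by (simp add: insert_absorb incidence_remove_self distrib_left sum_distrib_left
        mult.assoc[symmetric] incidence_square)
  moreover have "bdry n (cone_chain a c) G = (\<Sum>v\<in>{1..n} - G. - s v)"
    unfolding bdry_def
  proof (rule sum.cong[OF refl])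
    fix v assume "v \<in> {1..n} - G"
    then have v: "v \<noteq> a" "v \<notin> G" using True by auto
    have "insert a (G - {a}) = G" using True by auto
    then have "incidence G v = (if a < v then - incidence (G - {a}) v else (incidence (G - {a}) v :: 'k))"
      using incidence_insert[of a "G - {a}" v] v by simp
    moreover have "cone_chain a c (insert v G) = incidence (insert v G) a * c (insert v (G - {a}))"
      using True v by (simp add: cone_chain_def insert_Diff_if)
    ultimately show "incidence G v * cone_chain a c (insert v G) = - s v"
      unfolding s_def using v incidence_insert[of v G a] by (cases "v < a") auto
  qed
  ultimately show ?thesis by (simp add: sum_negf)
qed

lemma bdry_cone_chain_cycle:
  "a \<in> {1..n} \<Longrightarrow> bdry n c = (\<lambda>_. 0) \<Longrightarrow> bdry n (cone_chain a c) = (c :: nat set \<Rightarrow> 'k::field)"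
  by (rule ext) (simp add: bdry_cone_chain cone_chain_def)

lemma bdry_cone_chain_restrict:
  fixes z :: "nat set \<Rightarrow> 'k::field"
  assumes b: "b \<in> {1..n}" and z: "bdry n z = (\<lambda>_. 0)"
  shows "bdry n (cone_chain b (\<lambda>G. if b \<notin> G then z G else 0)) = z"
proof -
  define p where "p = link_chain b z"
  define q where "q = (\<lambda>G. if b \<notin> G then z G else 0)"
  have z_eq: "z = (\<lambda>G. cone_chain b p G + q G)"
    using cone_chain_link_chain[of b z] unfolding p_def q_def by simp
  have p_eq: "p F = - bdry n q F" if "b \<notin> F" for F
  proof -
    have "0 = bdry n (\<lambda>G. cone_chain b p G + q G) F" using z z_eq by simp
    also have "\<dots> = p F + bdry n q F"
      using that by (simp add: bdry_add bdry_cone_chain[OF b]) (simp add: cone_chain_def)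
    finally show ?thesis by (simp add: eq_neg_iff_add_eq_0)
  qed
  have "cone_chain b p G = - cone_chain b (bdry n q) G" for G
    using p_eq by (simp add: cone_chain_def)
  then show ?thesis
    using z_eq bdry_cone_chain[OF b, of q] unfolding q_def by (simp add: fun_eq_iff)
qed

lemma bdry_eq_0_if_bdry_cone_chain:
  fixes u :: "nat set \<Rightarrow> 'k::field"
  assumes a: "a \<in> {1..n}" and u: "\<And>G. a \<in> G \<Longrightarrow> u G = 0"
    and bdry_cone: "\<And>G. a \<in> G \<Longrightarrow> bdry n (cone_chain a u) G = 0"
  shows "bdry n u = (\<lambda>_. 0)"
proof
  fix F
  show "bdry n u F = 0"
  proof (cases "a \<in> F")
    case False
    have "0 = bdry n (cone_chain a u) (insert a F)" using bdry_cone by simp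
    also have "\<dots> = - (incidence F a * bdry n u F)"
      using False by (simp add: bdry_cone_chain[OF a] u cone_chain_insert)
    moreover have "incidence F a \<noteq> (0::'k)" by (rule incidence_nonzero)
    ultimately show ?thesis by simp
  qed (meson bdry_eq_0_if_mem u)
qed

text \<open>The terms of \<open>\<partial>\<partial>c\<close> cancel in pairs, swapping the order in which two vertices are added.\<close>
lemma bdry_bdry: "bdry n (bdry n c) G = (0::'k::field)"
proof -
  define S where "S = {1..n} - G"
  define f where "f v w = incidence G v * incidence (insert v G) w * c (insert w (insert v G))" for v w
  define P where "P = {p\<in>S\<times>S. fst p < snd p}"
  have fin: "finite S" unfolding S_def by auto
  have anti: "f v w = - f w v" if "v \<in> S" "w \<in> S" "v \<noteq> w" for v w
  proof -
    have "v \<notin> G" "w \<notin> G" using that unfolding S_def by auto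
    then have "incidence (insert v G) w = (if v < w then - incidence G w else (incidence G w :: 'k))"
      "incidence (insert w G) v = (if w < v then - incidence G v else (incidence G v :: 'k))"
      using that by (simp_all add: incidence_insert)
    then show ?thesis
      using that unfolding f_def by (cases "v < w") (auto simp: insert_commute mult.commute mult.left_commute)
  qed
  have "bdry n (bdry n c) G = (\<Sum>v\<in>S. \<Sum>w\<in>S - {v}. f v w)"
    unfolding bdry_def S_def f_def
    by (intro sum.cong refl) (auto simp: sum_distrib_left mult.assoc intro!: sum.cong)
  also have "\<dots> = (\<Sum>p\<in>(SIGMA v:S. S - {v}). f (fst p) (snd p))"
    using fin by (subst sum.Sigma) (auto simp: case_prod_beta)
  also have "(SIGMA v:S. S - {v}) = P \<union> prod.swap ` P"
    unfolding P_def by force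
  also have "(\<Sum>p\<in>P \<union> prod.swap ` P. f (fst p) (snd p)) = (\<Sum>p\<in>P. f (fst p) (snd p) + f (snd p) (fst p))"
    using fin unfolding P_def
    by (subst sum.union_disjoint) (auto simp: sum.reindex inj_on_def sum.distrib)
  also have "\<dots> = 0"
    unfolding P_def by (intro sum.neutral) (auto dest: anti)
  finally show ?thesis .
qed

lemma bd_eq_bdry:
  assumes "\<Gamma> \<subseteq> Pow {1..n}" and "c \<in> chains \<Gamma> k"
  shows "bd \<Gamma> c = bdry n (c :: nat set \<Rightarrow> 'k::field)"
proof
  fix G
  have "(\<Sum>v\<in>\<Union>\<Gamma> - G. incidence G v * c (insert v G)) = (\<Sum>v\<in>{1..n} - G. incidence G v * c (insert v G))"
    using assms by (intro sum.mono_neutral_left) (auto simp: chains_def)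
  then show "bd \<Gamma> c G = bdry n c G" by (simp add: bd_def bdry_def incidence_def)
qed

lemma homology_vanishes_iff:
  assumes "\<Gamma> \<subseteq> Pow {1..n}"
  shows "homology_vanishes TYPE('k::field) n \<Gamma> k \<longleftrightarrow> \<not> reduced_homology_nonzero TYPE('k) \<Gamma> k"
proof -
  have bd: "bd \<Gamma> c = bdry n c" if "c \<in> (chains \<Gamma> j :: (nat set \<Rightarrow> 'k) set)" for c j
    using bd_eq_bdry[OF assms that] .
  show ?thesis
    unfolding cycles_bound_in_def reduced_homology_nonzero_def
    by (simp add: bd cong: ball_cong bex_cong)
qed

lemma chains_mono: "c \<in> chains \<Gamma> k \<Longrightarrow> \<Gamma> \<subseteq> \<Gamma>' \<Longrightarrow> c \<in> chains \<Gamma>' k"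
  unfolding chains_def by auto

lemma chains_Int: "c \<in> chains \<Gamma> k \<Longrightarrow> c \<in> chains \<Gamma>' k \<Longrightarrow> c \<in> chains (\<Gamma> \<inter> \<Gamma>') k"
  unfolding chains_def by auto

lemma chains_closed:
  assumes "a \<in> chains \<Gamma> k" "b \<in> chains \<Gamma> k" "\<And>G. a G = 0 \<Longrightarrow> b G = 0 \<Longrightarrow> c G = 0"
  shows "c \<in> chains \<Gamma> k"
  using assms unfolding chains_def by blast

lemma chains_add:
  "a \<in> chains \<Gamma> k \<Longrightarrow> b \<in> chains \<Gamma> k \<Longrightarrow> (\<lambda>G. a G + b G) \<in> (chains \<Gamma> k :: (nat set \<Rightarrow> 'k::field) set)"
  by (erule chains_closed) simp_all

lemma chains_diff:
  "a \<in> chains \<Gamma> k \<Longrightarrow> b \<in> chains \<Gamma> k \<Longrightarrow> (\<lambda>G. a G - b G) \<in> (chains \<Gamma> k :: (nat set \<Rightarrow> 'k::field) set)"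
  by (erule chains_closed) simp_all

lemma chains_restrict:
  "c \<in> chains \<Gamma> k \<Longrightarrow> (\<lambda>G. if P G then c G else 0) \<in> chains {F\<in>\<Gamma>. P F} k"
  unfolding chains_def by auto

lemma chains_if_support:
  "x \<in> chains \<Gamma> k \<Longrightarrow> (\<And>G. y G \<noteq> 0 \<Longrightarrow> x G \<noteq> 0) \<Longrightarrow> y \<in> chains \<Gamma> k"
  unfolding chains_def by blast

lemma simplicial_complex_finite: "simplicial_complex n \<Gamma> \<Longrightarrow> F \<in> \<Gamma> \<Longrightarrow> finite F"
  unfolding simplicial_complex_def by (auto intro: finite_subset)

lemma simplicial_complex_subset: "simplicial_complex n \<Gamma> \<Longrightarrow> F \<in> \<Gamma> \<Longrightarrow> G \<subseteq> F \<Longrightarrow> G \<in> \<Gamma>"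
  unfolding simplicial_complex_def by blast

lemma bdry_chains:
  assumes \<Gamma>: "simplicial_complex n \<Gamma>" and c: "c \<in> chains \<Gamma> k"
  shows "bdry n c \<in> (chains \<Gamma> (k - 1) :: (nat set \<Rightarrow> 'k::field) set)"
  unfolding chains_def
proof (intro CollectI allI impI)
  fix G assume "bdry n c G \<noteq> 0"
  then obtain v where v: "v \<notin> G" "c (insert v G) \<noteq> 0" using bdry_nonzeroD by blast
  then have vG: "insert v G \<in> \<Gamma>" "int (card (insert v G)) = k + 1" using c by (auto simp: chains_def)
  then have "G \<in> \<Gamma>" using simplicial_complex_subset[OF \<Gamma>] by blast
  with vG v show "G \<in> \<Gamma> \<and> int (card G) = k - 1 + 1"
    using simplicial_complex_finite[OF \<Gamma>] by simp
qed

lemma cone_chain_chains: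
  assumes \<Gamma>: "simplicial_complex n \<Gamma>" and c: "c \<in> chains \<Gamma> k"
  shows "cone_chain a c \<in> (chains (cone \<Gamma> a) (k + 1) :: (nat set \<Rightarrow> 'k::field) set)"
  unfolding chains_def
proof (intro CollectI allI impI)
  fix G assume "cone_chain a c G \<noteq> 0"
  then have a: "a \<in> G" and "c (G - {a}) \<noteq> 0" by (auto simp: cone_chain_def split: if_splits)
  then have F: "G - {a} \<in> \<Gamma>" "int (card (G - {a})) = k + 1" using c by (auto simp: chains_def)
  have G: "G = insert a (G - {a})" using a by auto
  then have "G \<in> cone \<Gamma> a" using F(1) unfolding cone_def by blast
  moreover have "card G = Suc (card (G - {a}))"
    using G simplicial_complex_finite[OF \<Gamma> F(1)] by (metis card_insert_disjoint Diff_iff insertI1)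
  ultimately show "G \<in> cone \<Gamma> a \<and> int (card G) = k + 1 + 1" using F(2) by simp
qed

lemma link_chain_chains:
  assumes \<Gamma>: "simplicial_complex n \<Gamma>" and w: "w \<in> chains \<Gamma> k"
  shows "link_chain a w \<in> (chains (link a \<Gamma>) (k - 1) :: (nat set \<Rightarrow> 'k::field) set)"
  unfolding chains_def
proof (intro CollectI allI impI)
  fix F assume "link_chain a w F \<noteq> 0"
  then have a: "a \<notin> F" and "w (insert a F) \<noteq> 0" by (auto simp: link_chain_def split: if_splits)
  then have aF: "insert a F \<in> \<Gamma>" "int (card (insert a F)) = k + 1" using w by (auto simp: chains_def)
  moreover have "finite F" using simplicial_complex_finite[OF \<Gamma> aF(1)] by simp
  ultimately show "F \<in> link a \<Gamma> \<and> int (card F) = k - 1 + 1"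
    using a unfolding link_def by simp
qed

subsection \<open>Cones, links and deletions\<close>

lemma mem_cone_iff:
  assumes \<Gamma>: "simplicial_complex n \<Gamma>"
  shows "X \<in> cone \<Gamma> a \<longleftrightarrow> X - {a} \<in> \<Gamma>"
proof
  assume "X \<in> cone \<Gamma> a"
  then obtain F where "F \<in> \<Gamma>" "X - {a} \<subseteq> F" unfolding cone_def by blast
  then show "X - {a} \<in> \<Gamma>" using simplicial_complex_subset[OF \<Gamma>] by blast
next
  assume X: "X - {a} \<in> \<Gamma>"
  show "X \<in> cone \<Gamma> a"
  proof (cases "a \<in> X")
    case True
    then have "X = insert a (X - {a})" by blast
    then show ?thesis using X unfolding cone_def by blast
  qed (use X in \<open>simp add: cone_def\<close>)
qed

lemma simplicial_complex_cone:
  assumes \<Gamma>: "simplicial_complex n \<Gamma>" and a: "a \<in> {1..n}"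
  shows "simplicial_complex n (cone \<Gamma> a)"
  unfolding simplicial_complex_def
proof (intro conjI ballI allI impI subsetI)
  fix X assume "X \<in> cone \<Gamma> a"
  then have "X - {a} \<in> Pow {1..n}" using \<Gamma> unfolding simplicial_complex_def mem_cone_iff[OF \<Gamma>] by blast
  with a show "X \<in> Pow {1..n}" by auto
next
  fix X G assume "X \<in> cone \<Gamma> a" "G \<subseteq> X"
  then show "G \<in> cone \<Gamma> a" using simplicial_complex_subset[OF \<Gamma>] unfolding mem_cone_iff[OF \<Gamma>] by blast
qed

lemma simplicial_complex_link:
  "simplicial_complex n \<Gamma> \<Longrightarrow> simplicial_complex n (link a \<Gamma>)"
  unfolding simplicial_complex_def link_def by (auto, meson insert_mono)

lemma simplicial_complex_Collect:
  "simplicial_complex n \<Gamma> \<Longrightarrow> (\<And>F G. P F \<Longrightarrow> G \<subseteq> F \<Longrightarrow> P G) \<Longrightarrow> simplicial_complex n {F\<in>\<Gamma>. P F}"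
  unfolding simplicial_complex_def by blast

text \<open>If \<open>a\<close> can be exchanged with \<open>b\<close>, a cycle of the deletion of \<open>a\<close> that bounds in \<open>\<Gamma>\<close> is,
  up to the boundary of a chain of the deletion, a cycle of the link of \<open>a\<close>, and the cone over it
  from \<open>b\<close> lies in the deletion.\<close>
lemma homology_vanishes_deletion:
  fixes k :: int
  assumes \<Gamma>: "simplicial_complex n \<Gamma>" and a: "a \<in> {1..n}" and b: "b \<in> {1..n}" and "a \<noteq> b"
    and exchange: "\<And>F. a \<notin> F \<Longrightarrow> b \<notin> F \<Longrightarrow> insert a F \<in> \<Gamma> \<Longrightarrow> insert b F \<in> \<Gamma>"
    and H: "homology_vanishes TYPE('k::field) n \<Gamma> k"
  shows "homology_vanishes TYPE('k) n (deletion a \<Gamma>) k"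
  unfolding cycles_bound_in_def
proof (intro ballI impI)
  fix y :: "nat set \<Rightarrow> 'k" assume y: "y \<in> chains (deletion a \<Gamma>) k" and Dy: "bdry n y = (\<lambda>_. 0)"
  have "y \<in> chains \<Gamma> k" using y chains_mono unfolding deletion_def by blast
  then obtain w where w: "w \<in> chains \<Gamma> (k + 1)" and Dw: "bdry n w = y"
    using H Dy unfolding cycles_bound_in_def by blast
  define u where "u = link_chain a w"
  define w0 where "w0 = (\<lambda>G. if a \<notin> G then w G else 0)"
  have y_eq: "y G = bdry n (cone_chain a u) G + bdry n w0 G" for G
    using Dw cone_chain_link_chain[of a w] by (simp add: u_def w0_def bdry_add flip: bdry_add)
  have Dw0: "bdry n w0 G = 0" if "a \<in> G" for G
    by (rule bdry_eq_0_if_mem[OF _ that]) (simp add: w0_def)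
  have u_a: "u G = 0" if "a \<in> G" for G using that by (simp add: u_def link_chain_def)
  have Du: "bdry n u = (\<lambda>_. 0)"
  proof (rule bdry_eq_0_if_bdry_cone_chain[OF a u_a])
    fix G assume "a \<in> G"
    moreover from this have "y G = 0" using y unfolding chains_def deletion_def by blast
    ultimately show "bdry n (cone_chain a u) G = 0" using y_eq[of G] Dw0 by simp
  qed
  define q where "q = (\<lambda>G. if b \<notin> G then u G else 0)"
  have "q \<in> chains {F\<in>link a \<Gamma>. b \<notin> F} k"
    using link_chain_chains[OF \<Gamma> w] unfolding q_def u_def by (auto intro: chains_restrict)
  moreover have "simplicial_complex n {F\<in>link a \<Gamma>. b \<notin> F}"
    by (rule simplicial_complex_Collect[OF simplicial_complex_link[OF \<Gamma>]]) auto
  ultimately have "cone_chain b q \<in> chains (cone {F\<in>link a \<Gamma>. b \<notin> F} b) (k + 1)"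
    using cone_chain_chains by blast
  moreover have "cone {F\<in>link a \<Gamma>. b \<notin> F} b \<subseteq> deletion a \<Gamma>"
    using exchange \<open>a \<noteq> b\<close> simplicial_complex_subset[OF \<Gamma>]
    unfolding cone_def link_def deletion_def by blast
  ultimately have "cone_chain b q \<in> chains (deletion a \<Gamma>) (k + 1)" by (rule chains_mono)
  moreover have "w0 \<in> chains (deletion a \<Gamma>) (k + 1)"
    using chains_restrict[OF w] unfolding w0_def deletion_def by simp
  ultimately have "(\<lambda>G. cone_chain b q G + w0 G) \<in> chains (deletion a \<Gamma>) (k + 1)"
    by (rule chains_add)
  moreover have "bdry n (\<lambda>G. cone_chain b q G + w0 G) = y"
    using y_eq Du bdry_cone_chain_restrict[OF b Du]
    by (simp add: fun_eq_iff bdry_add bdry_cone_chain_cycle[OF a] q_def)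
  ultimately show "\<exists>x\<in>chains (deletion a \<Gamma>) (k + 1). bdry n x = y" by blast
qed

lemma fixed_by_perms_on_exchange:
  assumes "fixed_by_perms_on \<Delta> X" and "a \<in> X" "b \<in> X" "a \<notin> F" "b \<notin> F" "insert a F \<in> \<Delta>"
  shows "insert b F \<in> \<Delta>"
proof -
  have "transpose a b ` F = F"
    using assms(4,5) by (auto simp: transpose_def image_iff)
  then have "insert b F = transpose a b ` insert a F" by simp
  then have "insert b F \<in> (\<lambda>F. transpose a b ` F) ` \<Delta>" by (rule image_eqI[OF _ assms(6)])
  moreover have "(\<lambda>F. transpose a b ` F) ` \<Delta> = \<Delta>"
    using assms(1) unfolding fixed_by_perms_on_def by (simp add: permutes_swap_id assms(2,3))
  ultimately show ?thesis by simp
qed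

lemma avoiding_Suc: "avoiding \<Delta> (Suc j) = deletion (Suc j) (avoiding \<Delta> j)"
  unfolding avoiding_def deletion_def by (auto simp: atLeastAtMostSuc_conv)

lemma homology_vanishes_avoiding:
  assumes \<Delta>: "simplicial_complex n \<Delta>" and fixed: "fixed_by_perms_on \<Delta> {1..r}" and "r \<le> n"
    and H: "homology_vanishes TYPE('k::field) n \<Delta> k"
  shows "j < r \<Longrightarrow> homology_vanishes TYPE('k) n (avoiding \<Delta> j) k"
proof (induction j)
  case 0
  then show ?case using H by (simp add: avoiding_def)
next
  case (Suc j)
  have "simplicial_complex n (avoiding \<Delta> j)"
    unfolding avoiding_def by (rule simplicial_complex_Collect[OF \<Delta>]) auto
  moreover have "insert r F \<in> avoiding \<Delta> j"
    if "Suc j \<notin> F" "r \<notin> F" "insert (Suc j) F \<in> avoiding \<Delta> j" for F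
    using fixed_by_perms_on_exchange[OF fixed, of "Suc j" r F] that Suc.prems
    unfolding avoiding_def by auto
  ultimately show ?case
    unfolding avoiding_Suc using Suc \<open>r \<le> n\<close>
    by (intro homology_vanishes_deletion[where b = r]) auto
qed

subsection \<open>Unions of cones\<close>

lemma cones_up_to_Suc: "cones_up_to \<Delta> (Suc m) = cones_up_to \<Delta> m \<union> cone \<Delta> (Suc m)"
  unfolding cones_up_to_def by (auto simp: atLeastAtMostSuc_conv)

lemma simplicial_complex_cones_up_to:
  assumes \<Delta>: "simplicial_complex n \<Delta>" and "m \<le> n"
  shows "simplicial_complex n (cones_up_to \<Delta> m)"
proof -
  have "simplicial_complex n (cone \<Delta> j)" if "j \<in> {1..m}" for j
    using simplicial_complex_cone[OF \<Delta>] that \<open>m \<le> n\<close> by auto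
  note cone = this
  show ?thesis
    unfolding simplicial_complex_def
  proof (intro conjI ballI allI impI)
    have "cone \<Delta> j \<subseteq> Pow {1..n}" if "j \<in> {1..m}" for j
      using cone[OF that] unfolding simplicial_complex_def by blast
    moreover have "\<Delta> \<subseteq> Pow {1..n}" using \<Delta> unfolding simplicial_complex_def by blast
    ultimately show "cones_up_to \<Delta> m \<subseteq> Pow {1..n}"
      unfolding cones_up_to_def by (intro Un_least UN_least) auto
  next
    fix F G assume F: "F \<in> cones_up_to \<Delta> m" and "G \<subseteq> F"
    from F consider "F \<in> \<Delta>" | j where "j \<in> {1..m}" "F \<in> cone \<Delta> j"
      unfolding cones_up_to_def by blast
    then show "G \<in> cones_up_to \<Delta> m"
    proof cases
      case 1
      then show ?thesis using simplicial_complex_subset[OF \<Delta> _ \<open>G \<subseteq> F\<close>] by (simp add: cones_up_to_def)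
    next
      case (2 j)
      have "G \<in> cone \<Delta> j" by (rule simplicial_complex_subset[OF cone[OF 2(1)] 2(2) \<open>G \<subseteq> F\<close>])
      with 2 show ?thesis unfolding cones_up_to_def by blast
    qed
  qed
qed

lemma avoiding_cones_up_to: "avoiding (cones_up_to \<Delta> m) m = avoiding \<Delta> m"
  unfolding avoiding_def cones_up_to_def cone_def by auto

text \<open>This is where the symmetry enters: a face of \<open>\<Delta>\<^bsup>[m+1]\<^esup>\<close> meeting \<open>[m]\<close> in \<open>j\<close> is, after exchanging
  \<open>j\<close> and \<open>m+1\<close>, already a face of \<open>\<Delta>\<^bsup>[j]\<^esup>\<close>.\<close>
lemma cones_up_to_Suc_new_face:
  assumes \<Delta>: "simplicial_complex n \<Delta>" and fixed: "fixed_by_perms_on \<Delta> {1..r}" and "Suc m \<le> r"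
    and G: "G \<in> cones_up_to \<Delta> (Suc m)" "G \<notin> cones_up_to \<Delta> m"
  shows "Suc m \<in> G \<and> G \<inter> {1..m} = {}"
proof
  have "G \<in> cone \<Delta> (Suc m)" "G \<notin> \<Delta>"
    using G unfolding cones_up_to_Suc by (auto simp: cones_up_to_def)
  then have F: "G - {Suc m} \<in> \<Delta>" and M: "Suc m \<in> G"
    using mem_cone_iff[OF \<Delta>] by (blast, metis Diff_empty Diff_insert0)
  show "Suc m \<in> G" by (rule M)
  show "G \<inter> {1..m} = {}"
  proof (rule ccontr)
    assume "G \<inter> {1..m} \<noteq> {}"
    then obtain j where j: "j \<in> G" "j \<in> {1..m}" by blast
    define F' where "F' = G - {Suc m} - {j}"
    have "insert j F' = G - {Suc m}" using j unfolding F'_def by auto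
    then have "insert (Suc m) F' \<in> \<Delta>"
      using fixed_by_perms_on_exchange[OF fixed, of j "Suc m" F'] F j \<open>Suc m \<le> r\<close>
      unfolding F'_def by auto
    moreover have "G = insert j (insert (Suc m) F')" using j M unfolding F'_def by auto
    ultimately have "G \<in> cone \<Delta> j" unfolding cone_def by blast
    then show False using G(2) j(2) unfolding cones_up_to_def by blast
  qed
qed

lemma link_cones_up_to_Suc:
  assumes \<Delta>: "simplicial_complex n \<Delta>"
  shows "{F\<in>link (Suc m) (cones_up_to \<Delta> (Suc m)). F \<inter> {1..m} = {}} \<subseteq> avoiding \<Delta> m"
proof
  fix F assume "F \<in> {F\<in>link (Suc m) (cones_up_to \<Delta> (Suc m)). F \<inter> {1..m} = {}}"
  then have F: "Suc m \<notin> F" "insert (Suc m) F \<in> cones_up_to \<Delta> (Suc m)" "F \<inter> {1..m} = {}"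
    unfolding link_def by simp_all
  have "F \<in> \<Delta>"
  proof (cases "insert (Suc m) F \<in> cones_up_to \<Delta> m")
    case True
    moreover have "insert (Suc m) F \<inter> {1..m} = {}" using F(3) by simp
    ultimately have "insert (Suc m) F \<in> avoiding (cones_up_to \<Delta> m) m" by (simp add: avoiding_def)
    then have "insert (Suc m) F \<in> avoiding \<Delta> m" unfolding avoiding_cones_up_to .
    then have "insert (Suc m) F \<in> \<Delta>" unfolding avoiding_def by simp
    moreover have "F \<subseteq> insert (Suc m) F" by blast
    ultimately show ?thesis by (rule simplicial_complex_subset[OF \<Delta>])
  next
    case False
    then have "insert (Suc m) F \<in> cone \<Delta> (Suc m)" using F(2) unfolding cones_up_to_Suc by blast
    moreover have "insert (Suc m) F - {Suc m} = F" using F(1) by simp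
    ultimately show ?thesis unfolding mem_cone_iff[OF \<Delta>] by simp
  qed
  with F(3) show "F \<in> avoiding \<Delta> m" unfolding avoiding_def by blast
qed

lemma cone_avoiding_Int_cones_up_to:
  "cone (avoiding \<Delta> m) (Suc m) \<inter> cones_up_to \<Delta> m \<subseteq> avoiding \<Delta> m"
proof
  fix X assume X: "X \<in> cone (avoiding \<Delta> m) (Suc m) \<inter> cones_up_to \<Delta> m"
  then have "X \<inter> {1..m} = {}" unfolding cone_def avoiding_def by auto
  with X have "X \<in> avoiding (cones_up_to \<Delta> m) m" unfolding avoiding_def by blast
  then show "X \<in> avoiding \<Delta> m" unfolding avoiding_cones_up_to .
qed


lemma chains_cones_up_to_Suc_split:
  fixes z :: "nat set \<Rightarrow> 'k::field"
  assumes \<Delta>: "simplicial_complex n \<Delta>" and fixed: "fixed_by_perms_on \<Delta> {1..r}"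
    and "Suc m \<le> r" "r \<le> n" and z: "z \<in> chains (cones_up_to \<Delta> (Suc m)) i"
  obtains c e where "c \<in> chains (avoiding \<Delta> m) (i - 1)" "e \<in> chains (cones_up_to \<Delta> m) i"
    and "z = (\<lambda>G. cone_chain (Suc m) c G + e G)"
proof
  define c where "c = (\<lambda>F. if F \<inter> {1..m} = {} then link_chain (Suc m) z F else 0)"
  have Kc: "cone_chain (Suc m) c G = (if Suc m \<in> G \<and> G \<inter> {1..m} = {} then z G else 0)" for G
  proof -
    have "(G - {Suc m}) \<inter> {1..m} = G \<inter> {1..m}" by auto
    then show ?thesis unfolding c_def cone_chain_restrict_link_chain by simp
  qed
  have "simplicial_complex n (cones_up_to \<Delta> (Suc m))"
    using simplicial_complex_cones_up_to[OF \<Delta>] assms by simp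
  then have "c \<in> chains {F\<in>link (Suc m) (cones_up_to \<Delta> (Suc m)). F \<inter> {1..m} = {}} (i - 1)"
    unfolding c_def by (intro chains_restrict link_chain_chains z)
  then show "c \<in> chains (avoiding \<Delta> m) (i - 1)"
    using link_cones_up_to_Suc[OF \<Delta>] chains_mono by blast
  show "(\<lambda>G. z G - cone_chain (Suc m) c G) \<in> chains (cones_up_to \<Delta> m) i"
    unfolding chains_def
  proof (intro CollectI allI impI)
    fix G assume "z G - cone_chain (Suc m) c G \<noteq> 0"
    then have "z G \<noteq> 0" "\<not> (Suc m \<in> G \<and> G \<inter> {1..m} = {})"
      unfolding Kc by (auto split: if_splits)
    then show "G \<in> cones_up_to \<Delta> m \<and> int (card G) = i + 1"
      using z cones_up_to_Suc_new_face[OF \<Delta> fixed \<open>Suc m \<le> r\<close>] unfolding chains_def by blast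
  qed
qed simp

text \<open>With \<open>z = K\<^sub>m\<^sub>+\<^sub>1 c + e\<close>, the boundary \<open>y = \<partial>(K\<^sub>m\<^sub>+\<^sub>1 c) = -\<partial>e\<close> lies both in the cone over the faces
  avoiding \<open>[m]\<close> and in \<open>\<Sigma>\<^sub>m\<close>, hence is a cycle of the faces avoiding \<open>[m]\<close>. Filling it by \<open>w\<close>, the cycle
  \<open>e + w\<close> of \<open>\<Sigma>\<^sub>m\<close> bounds some \<open>x\<^sub>0\<close>, and \<open>z = \<partial>(x\<^sub>0 - K\<^sub>m\<^sub>+\<^sub>1 w)\<close>.\<close>
lemma cycles_bound_in_cones_up_to_Suc:
  fixes i :: int
  assumes \<Delta>: "simplicial_complex n \<Delta>" and fixed: "fixed_by_perms_on \<Delta> {1..r}"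
    and "Suc m \<le> r" "r \<le> n"
    and H: "homology_vanishes TYPE('k::field) n (avoiding \<Delta> m) (i - 1)"
    and IH: "cycles_bound_in TYPE('k) n (cones_up_to \<Delta> m) (cones_up_to \<Delta> r) i"
  shows "cycles_bound_in TYPE('k) n (cones_up_to \<Delta> (Suc m)) (cones_up_to \<Delta> r) i"
  unfolding cycles_bound_in_def
proof (intro ballI impI)
  fix z :: "nat set \<Rightarrow> 'k"
  assume z: "z \<in> chains (cones_up_to \<Delta> (Suc m)) i" and Dz: "bdry n z = (\<lambda>_. 0)"
  obtain c e where c: "c \<in> chains (avoiding \<Delta> m) (i - 1)" and e: "e \<in> chains (cones_up_to \<Delta> m) i"
    and z_eq: "z = (\<lambda>G. cone_chain (Suc m) c G + e G)"
    using chains_cones_up_to_Suc_split[OF \<Delta> fixed assms(3,4) z] .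
  have M: "Suc m \<in> {1..n}" using assms by auto
  have sc_avoiding: "simplicial_complex n (avoiding \<Delta> m)"
    unfolding avoiding_def by (rule simplicial_complex_Collect[OF \<Delta>]) auto
  define y where "y = bdry n (cone_chain (Suc m) c)"
  have y_e: "y G = - bdry n e G" for G
    using Dz unfolding z_eq y_def by (simp add: fun_eq_iff bdry_add eq_neg_iff_add_eq_0)
  have "y \<in> chains (cone (avoiding \<Delta> m) (Suc m)) (i - 1)"
    unfolding y_def using cone_chain_chains[OF sc_avoiding c]
    by (intro bdry_chains[OF simplicial_complex_cone[OF sc_avoiding M]]) simp
  moreover have "y \<in> chains (cones_up_to \<Delta> m) (i - 1)"
    using simplicial_complex_cones_up_to[OF \<Delta>] assms
    by (intro chains_if_support[OF bdry_chains[OF _ e]]) (simp_all add: y_e)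
  ultimately have "y \<in> chains (avoiding \<Delta> m) (i - 1)"
    using chains_Int chains_mono cone_avoiding_Int_cones_up_to by blast
  moreover have "bdry n y = (\<lambda>_. 0)" unfolding y_def by (simp add: fun_eq_iff bdry_bdry)
  ultimately obtain w where w: "w \<in> chains (avoiding \<Delta> m) i" and Dw: "bdry n w = y"
    using H unfolding cycles_bound_in_def by fastforce
  have "(\<lambda>G. e G + w G) \<in> chains (cones_up_to \<Delta> m) i"
    using chains_add[OF e chains_mono[OF w]] unfolding avoiding_def cones_up_to_def by blast
  moreover have "bdry n (\<lambda>G. e G + w G) = (\<lambda>_. 0)"
    using Dw y_e by (simp add: fun_eq_iff bdry_add)
  ultimately obtain x0 where x0: "x0 \<in> chains (cones_up_to \<Delta> r) (i + 1)"
    and Dx0: "bdry n x0 = (\<lambda>G. e G + w G)"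
    using IH unfolding cycles_bound_in_def by blast
  have "cone (avoiding \<Delta> m) (Suc m) \<subseteq> cones_up_to \<Delta> r"
    using assms unfolding cone_def avoiding_def cones_up_to_def by force
  then have "(\<lambda>G. x0 G - cone_chain (Suc m) w G) \<in> chains (cones_up_to \<Delta> r) (i + 1)"
    using chains_diff[OF x0] chains_mono[OF cone_chain_chains[OF sc_avoiding w]] by blast
  moreover have "cone_chain (Suc m) y = cone_chain (Suc m) c"
    unfolding y_def by (simp add: fun_eq_iff cone_chain_def bdry_cone_chain[OF M])
  then have "bdry n (\<lambda>G. x0 G - cone_chain (Suc m) w G) = z"
    by (simp add: fun_eq_iff bdry_diff bdry_cone_chain[OF M] Dx0 Dw z_eq)
  ultimately show "\<exists>x\<in>chains (cones_up_to \<Delta> r) (i + 1). bdry n x = z" by blast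
qed

lemma cycles_bound_in_cones_up_to:
  fixes i :: int
  assumes \<Delta>: "simplicial_complex n \<Delta>" and fixed: "fixed_by_perms_on \<Delta> {1..r}"
    and "1 \<le> r" "r \<le> n" and H: "homology_vanishes TYPE('k::field) n \<Delta> (i - 1)"
  shows "m \<le> r \<Longrightarrow> cycles_bound_in TYPE('k) n (cones_up_to \<Delta> m) (cones_up_to \<Delta> r) i"
proof (induction m)
  case 0
  show ?case
    unfolding cycles_bound_in_def
  proof (intro ballI impI)
    fix z :: "nat set \<Rightarrow> 'k"
    assume "z \<in> chains (cones_up_to \<Delta> 0) i" and Dz: "bdry n z = (\<lambda>_. 0)"
    then have "cone_chain 1 z \<in> chains (cone \<Delta> 1) (i + 1)"
      using cone_chain_chains[OF \<Delta>] by (simp add: cones_up_to_def)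
    moreover have "cone \<Delta> 1 \<subseteq> cones_up_to \<Delta> r" using \<open>1 \<le> r\<close> unfolding cones_up_to_def by auto
    moreover have "bdry n (cone_chain 1 z) = z"
      using bdry_cone_chain_cycle[OF _ Dz] assms by simp
    ultimately show "\<exists>x\<in>chains (cones_up_to \<Delta> r) (i + 1). bdry n x = z" by (blast intro: chains_mono)
  qed
next
  case (Suc m)
  then have "m < r" by simp
  show ?case
    using cycles_bound_in_cones_up_to_Suc[OF \<Delta> fixed Suc.prems \<open>r \<le> n\<close>
        homology_vanishes_avoiding[OF \<Delta> fixed \<open>r \<le> n\<close> H \<open>m < r\<close>] Suc.IH] \<open>m < r\<close>
    by simp
qed

theorem lemma3p2:
  fixes \<Delta> :: "nat set set" and n r :: nat and i :: int
  assumes "simplicial_complex n \<Delta>"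
    and "1 \<le> r" and "r \<le> n"
    and "fixed_by_perms_on \<Delta> {1..r}"
    and "reduced_homology_nonzero TYPE('k::field) (\<Union>j\<in>{1..r}. cone \<Delta> j) i"
  shows "reduced_homology_nonzero TYPE('k::field) \<Delta> (i - 1)"
proof -
  have \<Sigma>: "(\<Union>j\<in>{1..r}. cone \<Delta> j) = cones_up_to \<Delta> r"
    using \<open>1 \<le> r\<close> unfolding cones_up_to_def cone_def by auto
  have Pow: "\<Delta> \<subseteq> Pow {1..n}" "cones_up_to \<Delta> r \<subseteq> Pow {1..n}"
    using assms(1) simplicial_complex_cones_up_to[OF assms(1,3)] unfolding simplicial_complex_def by auto
  have "homology_vanishes TYPE('k) n \<Delta> (i - 1) \<Longrightarrow> homology_vanishes TYPE('k) n (cones_up_to \<Delta> r) i"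
    using cycles_bound_in_cones_up_to[OF assms(1,4,2,3)] by blast
  then show ?thesis
    using assms(5) unfolding \<Sigma> homology_vanishes_iff[where 'k = 'k, OF Pow(1)]
      homology_vanishes_iff[where 'k = 'k, OF Pow(2)] by blast
qed

end
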